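(* Let $n$ be even. Any quantum query algorithm that, given oracle access to $O_P$ for an arbitrary fixed-point-free involution $\sigma$ on $[n]$, outputs the single-bit descriptor of $\sigma$ with probability at least $\frac23$ must make $\Omega(n^{3/2})$ queries in the worst case.
   Context: A permutation $\sigma$ on $[n]$ is represented by its $n\times n$ permutation matrix $P$ with $P_{i,j}=1$ iff $\sigma(i)=j$, accessible only through the unitary $O_P:\lvert i,j,b\rangle\mapsto\lvert i,j,b\oplus P_{i,j}\rangle$. The single-bit descriptor of $\sigma$ is the string $z\in\{0,1\}^n$ with $z_i=\sigma(i)\bmod 2$. A fixed-point-free involution is a permutation $\sigma$ with $\sigma(\sigma(i))=i$ and $\sigma(i)\ne i$ for all $i$ (the $\mathsf{Descriptor}$ problem is computing the single-bit descriptor of such $\sigma$). *)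

theory Defs
  imports "HOL-Analysis.Analysis" "HOL-Combinatorics.Permutations"
begin

text \<open>Computational basis states of an algorithm with workspace of dimension m:
  (i, j, b, w) with i, j in [n] = {1..n}, b a bit, w < m.\<close>
type_synonym qstate = "nat \<times> nat \<times> bool \<times> nat"

definition qcarrier :: "nat \<Rightarrow> nat \<Rightarrow> qstate set" where
  "qcarrier n m = {1..n} \<times> {1..n} \<times> (UNIV :: bool set) \<times> {..<m}"

definition unitary_on :: "qstate set \<Rightarrow> (qstate \<Rightarrow> qstate \<Rightarrow> complex) \<Rightarrow> bool" where
  "unitary_on S U \<longleftrightarrow>
     (\<forall>s t. s \<notin> S \<or> t \<notin> S \<longrightarrow> U s t = 0) \<and>
     (\<forall>s\<in>S. \<forall>t\<in>S. (\<Sum>k\<in>S. cnj (U k s) * U k t) = (if s = t then 1 else 0))"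

definition apply_op :: "qstate set \<Rightarrow> (qstate \<Rightarrow> qstate \<Rightarrow> complex) \<Rightarrow> (qstate \<Rightarrow> complex) \<Rightarrow> (qstate \<Rightarrow> complex)" where
  "apply_op S U v = (\<lambda>s. \<Sum>t\<in>S. U s t * v t)"

definition basis_vec :: "qstate \<Rightarrow> qstate \<Rightarrow> complex" where
  "basis_vec s0 = (\<lambda>s. if s = s0 then 1 else 0)"

definition perm_matrix :: "(nat \<Rightarrow> nat) \<Rightarrow> nat \<Rightarrow> nat \<Rightarrow> bool" where
  "perm_matrix \<sigma> i j \<longleftrightarrow> \<sigma> i = j"

definition query_op :: "(nat \<Rightarrow> nat) \<Rightarrow> (qstate \<Rightarrow> complex) \<Rightarrow> (qstate \<Rightarrow> complex)" where
  "query_op \<sigma> v = (\<lambda>(i, j, b, w). v (i, j, b \<noteq> perm_matrix \<sigma> i j, w))"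

primrec run :: "qstate set \<Rightarrow> (nat \<Rightarrow> qstate \<Rightarrow> qstate \<Rightarrow> complex) \<Rightarrow> (nat \<Rightarrow> nat) \<Rightarrow> nat \<Rightarrow> (qstate \<Rightarrow> complex)" where
  "run S U \<sigma> 0 = apply_op S (U 0) (basis_vec (1, 1, False, 0))"
| "run S U \<sigma> (Suc k) = apply_op S (U (Suc k)) (query_op \<sigma> (run S U \<sigma> k))"

definition descriptor :: "(nat \<Rightarrow> nat) \<Rightarrow> nat \<Rightarrow> bool" where
  "descriptor \<sigma> i = (\<sigma> i mod 2 = 1)"

definition fpf_involution :: "nat \<Rightarrow> (nat \<Rightarrow> nat) \<Rightarrow> bool" where
  "fpf_involution n \<sigma> \<longleftrightarrow> \<sigma> permutes {1..n} \<and> (\<forall>i\<in>{1..n}. \<sigma> (\<sigma> i) = i \<and> \<sigma> i \<noteq> i)"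

text \<open>A T-query algorithm (workspace dimension m, unitaries U 0 .. U T, classical
  post-processing f of the measured basis state) with output an n-bit string
  (a function on {1..n}); probability that the output equals the descriptor.\<close>
definition success_prob ::
  "nat \<Rightarrow> nat \<Rightarrow> nat \<Rightarrow> (nat \<Rightarrow> qstate \<Rightarrow> qstate \<Rightarrow> complex) \<Rightarrow> (qstate \<Rightarrow> nat \<Rightarrow> bool) \<Rightarrow> (nat \<Rightarrow> nat) \<Rightarrow> real" where
  "success_prob n m T U f \<sigma> =
     (\<Sum>s\<in>{s \<in> qcarrier n m. \<forall>i\<in>{1..n}. f s i = descriptor \<sigma> i}.
        (cmod (run (qcarrier n m) U \<sigma> T s))\<^sup>2)"

definition query_algorithm :: "nat \<Rightarrow> nat \<Rightarrow> nat \<Rightarrow> (nat \<Rightarrow> qstate \<Rightarrow> qstate \<Rightarrow> complex) \<Rightarrow> bool" where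
  "query_algorithm n m T U \<longleftrightarrow> (\<forall>k\<le>T. unitary_on (qcarrier n m) (U k))"

end

theory Submission
  imports Defs
begin

text \<open>A weighted adversary argument. Relate every fixed-point-free involution x to its
  conjugates y = (u v) x (u v) with u odd, v even and x u \<noteq> v. Then y (x u) = v is even while
  x (x u) = u is odd, so x and y have different descriptors, and a successful algorithm must
  drive the overlap of the final states of x and y from 1 down to 19/20. A query only sees the
  entries where the permutation matrices of x and y differ; weighting the AM-GM bound for these
  entries by 1/sqrt n on the support of x's matrix and by sqrt n elsewhere, one query lowers the
  total overlap by at most 8 sqrt n per involution, because an entry (i, x i) is moved by at most
  4n conjugations and any other entry by at most 4. Every involution has about n^2/4
  conjugates, so T \<ge> n^(3/2) / 1280.\<close>

section \<open>Inner products on a finite basis\<close>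

definition inner_on :: "'a set \<Rightarrow> ('a \<Rightarrow> complex) \<Rightarrow> ('a \<Rightarrow> complex) \<Rightarrow> complex" where
  "inner_on S v w = (\<Sum>s\<in>S. cnj (v s) * w s)"

definition mass_on :: "'a set \<Rightarrow> ('a \<Rightarrow> complex) \<Rightarrow> real" where
  "mass_on S v = (\<Sum>s\<in>S. (cmod (v s))\<^sup>2)"

lemma inner_on_self: "inner_on S v v = of_real (mass_on S v)"
  unfolding inner_on_def mass_on_def of_real_sum
  by (intro sum.cong refl) (metis complex_norm_square mult.commute)

lemma mass_on_nonneg: "mass_on S v \<ge> 0"
  by (simp add: mass_on_def sum_nonneg)

lemma mass_on_mono: "finite B \<Longrightarrow> A \<subseteq> B \<Longrightarrow> mass_on A v \<le> mass_on B v"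
  unfolding mass_on_def by (rule sum_mono2) auto

lemma mass_on_Diff: "finite S \<Longrightarrow> A \<subseteq> S \<Longrightarrow> mass_on (S - A) v = mass_on S v - mass_on A v"
  by (simp add: mass_on_def sum_diff)

lemma inner_on_apply_op:
  assumes U: "unitary_on S U" and fin: "finite S"
  shows "inner_on S (apply_op S U v) (apply_op S U w) = inner_on S v w"
proof -
  have "inner_on S (apply_op S U v) (apply_op S U w) =
     (\<Sum>s\<in>S. \<Sum>t'\<in>S. \<Sum>t\<in>S. cnj (v t) * w t' * (cnj (U s t) * U s t'))"
    by (simp add: inner_on_def apply_op_def sum_product algebra_simps)
  also have "\<dots> = (\<Sum>t\<in>S. \<Sum>s\<in>S. \<Sum>t'\<in>S. cnj (v t) * w t' * (cnj (U s t) * U s t'))"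
    by (subst sum.swap) (rule sum.cong[OF refl], rule sum.swap)
  also have "\<dots> = (\<Sum>t\<in>S. \<Sum>t'\<in>S. cnj (v t) * w t' * (\<Sum>s\<in>S. cnj (U s t) * U s t'))"
    by (simp add: sum_distrib_left, subst sum.swap, rule refl)
  also have "\<dots> = (\<Sum>t\<in>S. \<Sum>t'\<in>S. cnj (v t) * w t' * (if t = t' then 1 else 0))"
    using U unfolding unitary_on_def by (intro sum.cong refl) auto
  also have "\<dots> = inner_on S v w"
    by (simp add: inner_on_def fin if_distrib cong: if_cong)
  finally show ?thesis .
qed

lemma mult_le_weighted_squares:
  fixes x y e :: real
  assumes "e > 0"
  shows "x * y \<le> (e * x\<^sup>2 + y\<^sup>2 / e) / 2"
proof -
  have "0 \<le> (e * x - y)\<^sup>2 / e" using assms by simp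
  also have "(e * x - y)\<^sup>2 / e = e * x\<^sup>2 + y\<^sup>2 / e - 2 * x * y"
    using assms by (simp add: field_simps power2_eq_square)
  finally show ?thesis by simp
qed

lemma norm_inner_on_le:
  assumes "e > 0"
  shows "cmod (inner_on S v w) \<le> (e * mass_on S v + mass_on S w / e) / 2"
proof -
  have "cmod (inner_on S v w) \<le> (\<Sum>s\<in>S. cmod (v s) * cmod (w s))"
    unfolding inner_on_def by (rule order_trans[OF norm_sum]) (simp add: norm_mult)
  also have "\<dots> \<le> (\<Sum>s\<in>S. (e * (cmod (v s))\<^sup>2 + (cmod (w s))\<^sup>2 / e) / 2)"
    by (intro sum_mono mult_le_weighted_squares assms)
  also have "\<dots> = (e * mass_on S v + mass_on S w / e) / 2"
    by (simp add: mass_on_def sum.distrib sum_distrib_left sum_divide_distrib add_divide_distrib)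
  finally show ?thesis .
qed

lemma norm_inner_on_separated_le:
  assumes fin: "finite S" and A: "A \<subseteq> S"
    and v: "mass_on S v = 1" "mass_on A v \<ge> 2/3"
    and w: "mass_on S w = 1" "mass_on A w \<le> 1/3"
  shows "cmod (inner_on S v w) \<le> 19/20"
proof -
  have split: "inner_on S v w = inner_on A v w + inner_on (S - A) v w"
    unfolding inner_on_def using fin A by (metis add.commute sum.subset_diff)
  have rest: "mass_on (S - A) v = 1 - mass_on A v" "mass_on (S - A) w = 1 - mass_on A w"
    using fin A v w by (simp_all add: mass_on_Diff)
  \<comment> \<open>weight 4/5 on A and 5/4 off A give the bound 41/40 - 9/40 (mass_on A v - mass_on A w)\<close>
  have "cmod (inner_on A v w) \<le> (4/5 * mass_on A v + mass_on A w / (4/5)) / 2"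
    by (rule norm_inner_on_le) simp
  moreover have "cmod (inner_on (S - A) v w)
      \<le> (5/4 * mass_on (S - A) v + mass_on (S - A) w / (5/4)) / 2"
    by (rule norm_inner_on_le) simp
  ultimately show ?thesis
    using split rest v w norm_triangle_ineq[of "inner_on A v w" "inner_on (S - A) v w"]
    by (simp add: field_simps)
qed

lemma inner_on_reindex:
  assumes "bij_betw h K K"
  shows "inner_on K (v \<circ> h) (w \<circ> h) = inner_on K v w"
  using sum.reindex_bij_betw[OF assms, of "\<lambda>s. cnj (v s) * w s"] by (simp add: inner_on_def)

lemma mass_on_reindex:
  assumes "bij_betw h K K"
  shows "mass_on K (v \<circ> h) = mass_on K v"
  using sum.reindex_bij_betw[OF assms, of "\<lambda>s. (cmod (v s))\<^sup>2"] by (simp add: mass_on_def)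

lemma norm_inner_on_reindex_diff_le:
  assumes g: "bij_betw g K K" and h: "bij_betw h K K" and e: "e > 0"
  shows "cmod (inner_on K (v \<circ> g) (w \<circ> h) - inner_on K v w)
    \<le> e * mass_on K v + mass_on K w / e"
proof -
  have "cmod (inner_on K (v \<circ> g) (w \<circ> h)) \<le> (e * mass_on K v + mass_on K w / e) / 2"
    using norm_inner_on_le[OF e, of K "v \<circ> g" "w \<circ> h"] by (simp add: mass_on_reindex g h)
  moreover have "cmod (inner_on K v w) \<le> (e * mass_on K v + mass_on K w / e) / 2"
    by (rule norm_inner_on_le[OF e])
  ultimately show ?thesis
    using norm_triangle_ineq4[of "inner_on K (v \<circ> g) (w \<circ> h)" "inner_on K v w"] by argo
qed

section \<open>Blocks of the query registers\<close>

definition block :: "(qstate \<Rightarrow> complex) \<Rightarrow> nat \<Rightarrow> nat \<Rightarrow> bool \<times> nat \<Rightarrow> complex" where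
  "block v i j = (\<lambda>(b, k). v (i, j, b, k))"

definition block_mass :: "nat \<Rightarrow> (qstate \<Rightarrow> complex) \<Rightarrow> nat \<Rightarrow> nat \<Rightarrow> real" where
  "block_mass m v i j = mass_on (UNIV \<times> {..<m}) (block v i j)"

definition toggle_bit :: "bool \<Rightarrow> bool \<times> nat \<Rightarrow> bool \<times> nat" where
  "toggle_bit p = (\<lambda>(b, k). (b \<noteq> p, k))"

lemma block_mass_nonneg: "block_mass m v i j \<ge> 0"
  by (simp add: block_mass_def mass_on_nonneg)

lemma bij_toggle_bit: "bij_betw (toggle_bit p) (UNIV \<times> K) (UNIV \<times> K)"
  by (rule bij_betw_byWitness[where f' = "toggle_bit p"]) (auto simp: toggle_bit_def)

lemma block_query_op: "block (query_op x v) i j = block v i j \<circ> toggle_bit (perm_matrix x i j)"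
  by (auto simp: block_def query_op_def toggle_bit_def)

lemma finite_qcarrier: "finite (qcarrier n m)"
  by (simp add: qcarrier_def)

lemma sum_qcarrier:
  "(\<Sum>s\<in>qcarrier n m. g s) = (\<Sum>i\<in>{1..n}. \<Sum>j\<in>{1..n}. \<Sum>(b, k)\<in>UNIV \<times> {..<m}. g (i, j, b, k))"
  by (simp add: qcarrier_def sum.cartesian_product split_def)

lemma inner_on_qcarrier:
  "inner_on (qcarrier n m) v w =
     (\<Sum>i\<in>{1..n}. \<Sum>j\<in>{1..n}. inner_on (UNIV \<times> {..<m}) (block v i j) (block w i j))"
  by (simp add: inner_on_def sum_qcarrier block_def split_def)

lemma mass_on_qcarrier:
  "mass_on (qcarrier n m) v = (\<Sum>i\<in>{1..n}. \<Sum>j\<in>{1..n}. block_mass m v i j)"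
  by (simp add: mass_on_def block_mass_def sum_qcarrier block_def split_def)

lemma inner_on_query_op_same:
  "inner_on (qcarrier n m) (query_op x v) (query_op x w) = inner_on (qcarrier n m) v w"
  by (simp add: inner_on_qcarrier block_query_op inner_on_reindex bij_toggle_bit)

lemma norm_inner_on_query_op_diff_le:
  assumes e: "\<And>i j. e i j > 0"
  shows "cmod (inner_on (qcarrier n m) (query_op x v) (query_op y w) - inner_on (qcarrier n m) v w)
    \<le> (\<Sum>i\<in>{1..n}. \<Sum>j\<in>{1..n}. if perm_matrix x i j \<noteq> perm_matrix y i j
          then e i j * block_mass m v i j + block_mass m w i j / e i j else 0)"
proof -
  let ?K = "UNIV \<times> {..<m}"
  define d where "d i j = inner_on ?K (block (query_op x v) i j) (block (query_op y w) i j)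
    - inner_on ?K (block v i j) (block w i j)" for i j
  have "cmod (inner_on (qcarrier n m) (query_op x v) (query_op y w) - inner_on (qcarrier n m) v w)
      = cmod (\<Sum>i\<in>{1..n}. \<Sum>j\<in>{1..n}. d i j)"
    by (simp add: inner_on_qcarrier d_def sum_subtractf)
  also have "\<dots> \<le> (\<Sum>i\<in>{1..n}. \<Sum>j\<in>{1..n}. cmod (d i j))"
    by (rule order_trans[OF norm_sum sum_mono]) (rule norm_sum)
  also have "\<dots> \<le> (\<Sum>i\<in>{1..n}. \<Sum>j\<in>{1..n}. if perm_matrix x i j \<noteq> perm_matrix y i j
          then e i j * block_mass m v i j + block_mass m w i j / e i j else 0)"
    by (intro sum_mono)
      (simp add: d_def block_query_op inner_on_reindex bij_toggle_bit block_mass_def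
        norm_inner_on_reindex_diff_le e)
  finally show ?thesis .
qed

section \<open>Conjugating involutions by transpositions\<close>

lemma fpf_involution_permutes: "fpf_involution n x \<Longrightarrow> x permutes {1..n}"
  by (simp add: fpf_involution_def)

lemma fpf_involution_involutive:
  assumes "fpf_involution n x"
  shows "x (x i) = i"
proof (cases "i \<in> {1..n}")
  case True
  then show ?thesis using assms by (simp add: fpf_involution_def)
next
  case False
  then show ?thesis using fpf_involution_permutes[OF assms] by (simp add: permutes_not_in)
qed

lemma fpf_involution_in: "fpf_involution n x \<Longrightarrow> i \<in> {1..n} \<Longrightarrow> x i \<in> {1..n}"
  by (rule iffD2[OF permutes_in_image[OF fpf_involution_permutes]])

lemma fpf_involution_neq: "fpf_involution n x \<Longrightarrow> i \<in> {1..n} \<Longrightarrow> x i \<noteq> i"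
  by (simp add: fpf_involution_def)

lemma finite_fpf_involutions: "finite {x. fpf_involution n x}"
  by (rule finite_subset[OF _ finite_permutations]) (auto dest: fpf_involution_permutes)

lemma fpf_involution_exists:
  assumes "even n"
  shows "\<exists>x. fpf_involution n x"
proof
  define x where "x i = (if i \<in> {1..n} then if odd i then i + 1 else i - 1 else i)" for i
  have involutive: "x (x i) = i" for i
  proof (cases "i \<in> {1..n}")
    case True
    then show ?thesis using assms unfolding x_def by (auto; presburger)
  next
    case False
    then have "x i = i" unfolding x_def by auto
    then show ?thesis by simp
  qed
  have "x permutes {1..n}"
    unfolding permutes_def
  proof (intro conjI allI impI)
    show "x i = i" if "i \<notin> {1..n}" for i using that unfolding x_def by auto
    show "\<exists>!i. x i = j" for j
    proof
      show "x (x j) = j" by (rule involutive)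
      show "i = x j" if "x i = j" for i using involutive[of i] that by simp
    qed
  qed
  moreover have "x i \<noteq> i" if "i \<in> {1..n}" for i
    using that unfolding x_def by (cases "odd i") auto
  ultimately show "fpf_involution n x"
    by (simp add: fpf_involution_def involutive)
qed

fun swap_conj :: "nat \<times> nat \<Rightarrow> (nat \<Rightarrow> nat) \<Rightarrow> nat \<Rightarrow> nat" where
  "swap_conj (u, v) x = Transposition.transpose u v \<circ> x \<circ> Transposition.transpose u v"

definition flip_pairs :: "nat \<Rightarrow> (nat \<Rightarrow> nat) \<Rightarrow> (nat \<times> nat) set" where
  "flip_pairs n x = {(u, v). u \<in> {1..n} \<and> v \<in> {1..n} \<and> odd u \<and> even v \<and> x u \<noteq> v}"

definition conj_pairs :: "nat \<Rightarrow> ((nat \<Rightarrow> nat) \<times> (nat \<times> nat)) set" where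
  "conj_pairs n = Sigma {x. fpf_involution n x} (flip_pairs n)"

lemma finite_flip_pairs: "finite (flip_pairs n x)"
  by (rule finite_subset[of _ "{1..n} \<times> {1..n}"]) (auto simp: flip_pairs_def)

lemma swap_conj_swap_conj [simp]: "swap_conj p (swap_conj p x) = x"
  by (cases p) (simp add: fun_eq_iff)

lemma fpf_involution_swap_conj:
  assumes x: "fpf_involution n x" and uv: "u \<in> {1..n}" "v \<in> {1..n}"
  shows "fpf_involution n (swap_conj (u, v) x)"
proof -
  let ?\<tau> = "Transposition.transpose u v"
  have \<tau>: "?\<tau> permutes {1..n}" using uv by (rule permutes_swap_id)
  have "swap_conj (u, v) x permutes {1..n}"
    using permutes_compose[OF permutes_compose[OF \<tau> fpf_involution_permutes[OF x]] \<tau>]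
    by (simp add: comp_assoc)
  moreover have "swap_conj (u, v) x i \<noteq> i" if i: "i \<in> {1..n}" for i
  proof
    assume "swap_conj (u, v) x i = i"
    then have "?\<tau> (?\<tau> (x (?\<tau> i))) = ?\<tau> i" by simp
    then have "x (?\<tau> i) = ?\<tau> i" by (simp only: transpose_involutory)
    moreover have "?\<tau> i \<in> {1..n}" by (rule iffD2[OF permutes_in_image[OF \<tau>] i])
    ultimately show False using fpf_involution_neq[OF x] by blast
  qed
  moreover have "swap_conj (u, v) x (swap_conj (u, v) x i) = i" for i
    by (simp add: fpf_involution_involutive[OF x])
  ultimately show ?thesis
    unfolding fpf_involution_def by blast
qed

lemma flip_pairs_facts:
  assumes x: "fpf_involution n x" and p: "(u, v) \<in> flip_pairs n x"
  shows "u \<in> {1..n}" "v \<in> {1..n}" "odd u" "even v" "u \<noteq> v" "x u \<noteq> v" "x v \<noteq> u"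
    "x u \<noteq> u" "x v \<noteq> v"
  using p fpf_involution_involutive[OF x, of v] fpf_involution_neq[OF x, of u]
    fpf_involution_neq[OF x, of v]
  by (auto simp: flip_pairs_def)

lemma conj_pairs_swap_conj:
  assumes "(x, p) \<in> conj_pairs n"
  shows "(swap_conj p x, p) \<in> conj_pairs n"
proof -
  obtain u v where p: "p = (u, v)" by fastforce
  have x: "fpf_involution n x" and uv: "(u, v) \<in> flip_pairs n x"
    using assms by (auto simp: conj_pairs_def p)
  note facts = flip_pairs_facts[OF x uv]
  have "swap_conj (u, v) x u = x v"
    using facts by simp
  then show ?thesis
    using facts fpf_involution_swap_conj[OF x] by (simp add: p conj_pairs_def flip_pairs_def)
qed

lemma descriptor_swap_conj:
  assumes x: "fpf_involution n x" and p: "(u, v) \<in> flip_pairs n x"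
  shows "x u \<in> {1..n}" "descriptor (swap_conj (u, v) x) (x u) \<noteq> descriptor x (x u)"
proof -
  note facts = flip_pairs_facts[OF x p]
  show "x u \<in> {1..n}" using fpf_involution_in[OF x facts(1)] .
  have "swap_conj (u, v) x (x u) = v"
    using facts by (simp add: fpf_involution_involutive[OF x])
  then show "descriptor (swap_conj (u, v) x) (x u) \<noteq> descriptor x (x u)"
    using facts by (simp add: descriptor_def fpf_involution_involutive[OF x]) presburger
qed

lemma card_swap_conj_moves_le:
  assumes x: "fpf_involution n x"
  shows "card {p \<in> flip_pairs n x. swap_conj p x i \<noteq> x i} \<le> 4 * n"
proof -
  have "p \<in> {i, x i} \<times> {1..n} \<union> {1..n} \<times> {i, x i}"
    if p: "p \<in> flip_pairs n x" and moves: "swap_conj p x i \<noteq> x i" for p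
  proof -
    obtain u v where uv [simp]: "p = (u, v)" by fastforce
    have "u \<in> {i, x i} \<or> v \<in> {i, x i}"
      using moves by (auto simp: Transposition.transpose_def split: if_splits)
    then show ?thesis using p by (auto simp: flip_pairs_def)
  qed
  then have "{p \<in> flip_pairs n x. swap_conj p x i \<noteq> x i}
      \<subseteq> {i, x i} \<times> {1..n} \<union> {1..n} \<times> {i, x i}"
    by blast
  then have "card {p \<in> flip_pairs n x. swap_conj p x i \<noteq> x i}
      \<le> card ({i, x i} \<times> {1..n}) + card ({1..n} \<times> {i, x i})"
    by (meson card_Un_le card_mono finite_SigmaI finite_UnI finite.intros finite_atLeastAtMost
        order_trans)
  also have "\<dots> \<le> 4 * n"
    by (simp add: card_cartesian_product card_insert_if)
  finally show ?thesis .
qed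

lemma card_swap_conj_hits_le:
  assumes x: "fpf_involution n x" and j: "x i \<noteq> j"
  shows "card {p \<in> flip_pairs n x. swap_conj p x i = j} \<le> 4"
proof -
  have "p \<in> set [(i, x j), (x j, i), (x i, j), (j, x i)]"
    if p: "p \<in> flip_pairs n x" and hit: "swap_conj p x i = j" for p
  proof -
    obtain u v where uv [simp]: "p = (u, v)" by fastforce
    note facts = flip_pairs_facts[OF x p[unfolded uv]]
    consider "i = u" | "i = v" | "i \<noteq> u" "i \<noteq> v" by blast
    then show ?thesis
    proof cases
      case 1
      then have "x v = j" using hit facts by simp
      then show ?thesis using 1 fpf_involution_involutive[OF x, of v] by auto
    next
      case 2
      then have "x u = j" using hit facts by simp
      then show ?thesis using 2 fpf_involution_involutive[OF x, of u] by auto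
    next
      case 3
      then have "Transposition.transpose u v i = i" by (auto simp: Transposition.transpose_def)
      then have "Transposition.transpose u v (x i) = j" using hit by simp
      then show ?thesis using j unfolding Transposition.transpose_def by (auto split: if_splits)
    qed
  qed
  then have "{p \<in> flip_pairs n x. swap_conj p x i = j}
      \<subseteq> set [(i, x j), (x j, i), (x i, j), (j, x i)]"
    by blast
  then have "card {p \<in> flip_pairs n x. swap_conj p x i = j}
      \<le> card (set [(i, x j), (x j, i), (x i, j), (j, x i)])"
    by (rule card_mono[OF finite_set])
  also have "\<dots> \<le> 4"
    using card_length[of "[(i, x j), (x j, i), (x i, j), (j, x i)]"] by simp
  finally show ?thesis .
qed

lemma card_odd_atLeastAtMost: "card {u \<in> {1..2 * t}. odd u} = (t::nat)"
proof -
  have "{u \<in> {1..2 * t}. odd u} = (\<lambda>k. 2 * k + 1) ` {..<t}"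
  proof (intro set_eqI iffI)
    fix u assume "u \<in> {u \<in> {1..2 * t}. odd u}"
    then have "u = 2 * (u div 2) + 1" "u div 2 < t" by auto presburger
    then show "u \<in> (\<lambda>k. 2 * k + 1) ` {..<t}" by (metis imageI lessThan_iff)
  qed auto
  then show ?thesis by (simp add: card_image inj_on_def)
qed

lemma card_even_atLeastAtMost: "card {v \<in> {1..2 * t}. even v} = (t::nat)"
proof -
  have "{v \<in> {1..2 * t}. even v} = (\<lambda>k. 2 * k) ` {1..t}"
  proof (intro set_eqI iffI)
    fix v assume "v \<in> {v \<in> {1..2 * t}. even v}"
    then have "v = 2 * (v div 2)" "v div 2 \<in> {1..t}" by auto
    then show "v \<in> (\<lambda>k. 2 * k) ` {1..t}" by (metis imageI)
  qed auto
  then show ?thesis by (simp add: card_image inj_on_def)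
qed

lemma card_flip_pairs_ge:
  assumes "n = 2 * t"
  shows "t * (t - 1) \<le> card (flip_pairs n x)"
proof -
  let ?odd = "{u \<in> {1..2 * t}. odd u}" and ?even = "{v \<in> {1..2 * t}. even v}"
  have "flip_pairs n x = Sigma ?odd (\<lambda>u. ?even - {x u})"
    using assms by (auto simp: flip_pairs_def)
  then have "card (flip_pairs n x) = (\<Sum>u\<in>?odd. card (?even - {x u}))"
    by (simp only:) (rule card_SigmaI, auto)
  also have "\<dots> \<ge> (\<Sum>u\<in>?odd. t - 1)"
  proof (rule sum_mono)
    fix u
    have "card ?even - card {x u} \<le> card (?even - {x u})" by (rule diff_card_le_card_Diff) simp
    then show "t - 1 \<le> card (?even - {x u})" unfolding card_even_atLeastAtMost by simp
  qed
  finally show ?thesis unfolding sum_constant card_odd_atLeastAtMost by simp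
qed

lemma card_conj_pairs_ge:
  assumes "even n" "n \<ge> 4"
  shows "real (card {x. fpf_involution n x}) * (real n)\<^sup>2 \<le> 8 * real (card (conj_pairs n))"
proof -
  obtain t where t: "n = 2 * t" using assms(1) by blast
  obtain s where s: "t = s + 2" using assms(2) t by (intro that[of "t - 2"]) auto
  have "card {x. fpf_involution n x} * n\<^sup>2 \<le> card {x. fpf_involution n x} * (8 * (t * (t - 1)))"
    using t s by (intro mult_left_mono) (simp_all add: power2_eq_square algebra_simps)
  also have "\<dots> = 8 * (\<Sum>x\<in>{x. fpf_involution n x}. t * (t - 1))"
    by simp
  also have "\<dots> \<le> 8 * (\<Sum>x\<in>{x. fpf_involution n x}. card (flip_pairs n x))"
    by (intro mult_left_mono sum_mono card_flip_pairs_ge[OF t]) simp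
  also have "\<dots> = 8 * card (conj_pairs n)"
    unfolding conj_pairs_def
    by (subst card_SigmaI) (simp_all add: finite_fpf_involutions finite_flip_pairs)
  finally have "real (card {x. fpf_involution n x} * n\<^sup>2) \<le> real (8 * card (conj_pairs n))"
    by (simp only: of_nat_le_iff)
  then show ?thesis by simp
qed

section \<open>Adversary weights\<close>

definition query_weight :: "nat \<Rightarrow> (nat \<Rightarrow> nat) \<Rightarrow> nat \<Rightarrow> nat \<Rightarrow> real" where
  "query_weight n x i j = (if perm_matrix x i j then 1 / sqrt n else sqrt n)"

definition query_cost :: "nat \<Rightarrow> (nat \<Rightarrow> nat) \<Rightarrow> (nat \<Rightarrow> nat) \<Rightarrow> (nat \<Rightarrow> nat \<Rightarrow> real) \<Rightarrow> real" where
  "query_cost n x y b = (\<Sum>i\<in>{1..n}. \<Sum>j\<in>{1..n}.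
     if perm_matrix x i j \<noteq> perm_matrix y i j then query_weight n x i j * b i j else 0)"

lemma query_weight_pos: "n > 0 \<Longrightarrow> query_weight n x i j > 0"
  by (simp add: query_weight_def)

lemma divide_query_weight:
  "n > 0 \<Longrightarrow> perm_matrix x i j \<noteq> perm_matrix y i j \<Longrightarrow>
    c / query_weight n x i j = query_weight n y i j * c"
  by (auto simp: query_weight_def)

lemma query_weight_mult_card_changes_le:
  assumes x: "fpf_involution n x"
  shows "query_weight n x i j
      * card {p \<in> flip_pairs n x. perm_matrix x i j \<noteq> perm_matrix (swap_conj p x) i j}
    \<le> 4 * sqrt n"
proof (cases "x i = j")
  case True
  then have "{p \<in> flip_pairs n x. perm_matrix x i j \<noteq> perm_matrix (swap_conj p x) i j}
      = {p \<in> flip_pairs n x. swap_conj p x i \<noteq> x i}"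
    by (auto simp: perm_matrix_def simp del: swap_conj.simps)
  moreover have "real (card {p \<in> flip_pairs n x. swap_conj p x i \<noteq> x i}) / sqrt n
      \<le> 4 * n / sqrt n"
    using card_swap_conj_moves_le[OF x, of i] by (intro divide_right_mono) simp_all
  moreover have "4 * n / sqrt n = 4 * sqrt n"
    using real_div_sqrt[of "real n"] by simp
  ultimately show ?thesis
    using True by (simp add: query_weight_def perm_matrix_def)
next
  case False
  then have "{p \<in> flip_pairs n x. perm_matrix x i j \<noteq> perm_matrix (swap_conj p x) i j}
      = {p \<in> flip_pairs n x. swap_conj p x i = j}"
    by (auto simp: perm_matrix_def simp del: swap_conj.simps)
  moreover have "sqrt n * card {p \<in> flip_pairs n x. swap_conj p x i = j} \<le> sqrt n * 4"
    using card_swap_conj_hits_le[OF x False] by (intro mult_left_mono) simp_all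
  ultimately show ?thesis
    using False by (simp add: query_weight_def perm_matrix_def mult.commute)
qed

lemma sum_query_cost_flip_pairs_le:
  assumes x: "fpf_involution n x" and b: "\<And>i j. b i j \<ge> 0"
  shows "(\<Sum>p\<in>flip_pairs n x. query_cost n x (swap_conj p x) b)
    \<le> 4 * sqrt n * (\<Sum>i\<in>{1..n}. \<Sum>j\<in>{1..n}. b i j)"
proof -
  let ?changes = "\<lambda>i j. {p \<in> flip_pairs n x. perm_matrix x i j \<noteq> perm_matrix (swap_conj p x) i j}"
  have "(\<Sum>p\<in>flip_pairs n x. query_cost n x (swap_conj p x) b)
      = (\<Sum>i\<in>{1..n}. \<Sum>j\<in>{1..n}. \<Sum>p\<in>flip_pairs n x.
          if perm_matrix x i j \<noteq> perm_matrix (swap_conj p x) i j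
          then query_weight n x i j * b i j else 0)"
    unfolding query_cost_def by (subst sum.swap) (simp only: sum.swap[of _ "flip_pairs n x"])
  also have "\<dots> = (\<Sum>i\<in>{1..n}. \<Sum>j\<in>{1..n}. query_weight n x i j * card (?changes i j) * b i j)"
    by (simp add: sum.inter_filter[OF finite_flip_pairs, symmetric] mult_ac)
  also have "\<dots> \<le> (\<Sum>i\<in>{1..n}. \<Sum>j\<in>{1..n}. 4 * sqrt n * b i j)"
    by (intro sum_mono mult_right_mono query_weight_mult_card_changes_le[OF x] b)
  finally show ?thesis by (simp add: sum_distrib_left)
qed

lemma sum_query_cost_conj_pairs_le:
  assumes b: "\<And>x i j. b x i j \<ge> 0"
    and total: "\<And>x. fpf_involution n x \<Longrightarrow> (\<Sum>i\<in>{1..n}. \<Sum>j\<in>{1..n}. b x i j) = 1"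
  shows "(\<Sum>(x, p)\<in>conj_pairs n. query_cost n x (swap_conj p x) (b x)
      + query_cost n (swap_conj p x) x (b (swap_conj p x)))
    \<le> 8 * sqrt n * card {x. fpf_involution n x}"
proof -
  \<comment> \<open>the involution (x, p) \<mapsto> (swap_conj p x, p) of conj_pairs exchanges the two costs\<close>
  have "(\<Sum>(x, p)\<in>conj_pairs n. query_cost n (swap_conj p x) x (b (swap_conj p x)))
      = (\<Sum>(x, p)\<in>conj_pairs n. query_cost n x (swap_conj p x) (b x))"
    by (rule sum.reindex_bij_witness[where i = "\<lambda>(x, p). (swap_conj p x, p)"
          and j = "\<lambda>(x, p). (swap_conj p x, p)"])
      (auto simp del: swap_conj.simps intro: conj_pairs_swap_conj)
  moreover have "(\<Sum>(x, p)\<in>conj_pairs n. query_cost n x (swap_conj p x) (b x))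
      = (\<Sum>x\<in>{x. fpf_involution n x}. \<Sum>p\<in>flip_pairs n x. query_cost n x (swap_conj p x) (b x))"
    unfolding conj_pairs_def
    by (rule sum.Sigma[symmetric]) (simp_all add: finite_fpf_involutions finite_flip_pairs)
  moreover have "\<dots> \<le> (\<Sum>x\<in>{x. fpf_involution n x}. 4 * sqrt n)"
  proof (rule sum_mono)
    fix x assume "x \<in> {x. fpf_involution n x}"
    then have x: "fpf_involution n x" by simp
    show "(\<Sum>p\<in>flip_pairs n x. query_cost n x (swap_conj p x) (b x)) \<le> 4 * sqrt n"
      using sum_query_cost_flip_pairs_le[OF x, of "b x"] total[OF x] by (simp add: b)
  qed
  ultimately show ?thesis
    by (simp add: sum.distrib split_def mult_ac)
qed

section \<open>The progress measure of an algorithm\<close>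

locale descriptor_algorithm =
  fixes n m T :: nat and U :: "nat \<Rightarrow> qstate \<Rightarrow> qstate \<Rightarrow> complex"
    and f :: "qstate \<Rightarrow> nat \<Rightarrow> bool"
  assumes even_n: "even n"
    and algorithm: "query_algorithm n m T U"
    and succeeds: "\<And>\<sigma>. fpf_involution n \<sigma> \<Longrightarrow> success_prob n m T U f \<sigma> \<ge> 2/3"
begin

abbreviation state :: "(nat \<Rightarrow> nat) \<Rightarrow> nat \<Rightarrow> qstate \<Rightarrow> complex" where
  "state \<sigma> k \<equiv> run (qcarrier n m) U \<sigma> k"

definition success_set :: "(nat \<Rightarrow> nat) \<Rightarrow> qstate set" where
  "success_set \<sigma> = {s \<in> qcarrier n m. \<forall>i\<in>{1..n}. f s i = descriptor \<sigma> i}"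

lemma success_prob_eq: "success_prob n m T U f \<sigma> = mass_on (success_set \<sigma>) (state \<sigma> T)"
  by (simp add: success_prob_def success_set_def mass_on_def)

lemma initial_in_qcarrier: "(1, 1, False, 0) \<in> qcarrier n m"
proof -
  obtain \<sigma> where "fpf_involution n \<sigma>" using fpf_involution_exists[OF even_n] ..
  then have "success_set \<sigma> \<noteq> {}"
    using succeeds[of \<sigma>] by (auto simp: success_prob_eq mass_on_def)
  then show ?thesis by (auto simp: success_set_def qcarrier_def)
qed

lemma n_pos: "n > 0"
  using initial_in_qcarrier by (simp add: qcarrier_def)

lemma unitary_U: "k \<le> T \<Longrightarrow> unitary_on (qcarrier n m) (U k)"
  using algorithm by (simp add: query_algorithm_def)

lemma inner_on_state_self: "k \<le> T \<Longrightarrow> inner_on (qcarrier n m) (state \<sigma> k) (state \<sigma> k) = 1"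
proof (induction k)
  case 0
  have "inner_on (qcarrier n m) (basis_vec (1, 1, False, 0)) (basis_vec (1, 1, False, 0)) = 1"
    using initial_in_qcarrier finite_qcarrier
    by (simp add: inner_on_def basis_vec_def if_distrib cong: if_cong)
  then show ?case
    by (simp add: inner_on_apply_op unitary_U finite_qcarrier)
next
  case (Suc k)
  then show ?case
    by (simp add: inner_on_apply_op unitary_U finite_qcarrier inner_on_query_op_same)
qed

lemma mass_on_state: "k \<le> T \<Longrightarrow> mass_on (qcarrier n m) (state \<sigma> k) = 1"
  using inner_on_state_self[of k \<sigma>] by (simp add: inner_on_self)

lemma inner_on_state_0: "inner_on (qcarrier n m) (state x 0) (state y 0) = 1"
  using inner_on_state_self[of 0 x] by simp

lemma norm_inner_on_state_Suc_ge:
  assumes "Suc k \<le> T"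
  shows "cmod (inner_on (qcarrier n m) (state x k) (state y k))
      - (query_cost n x y (block_mass m (state x k)) + query_cost n y x (block_mass m (state y k)))
    \<le> cmod (inner_on (qcarrier n m) (state x (Suc k)) (state y (Suc k)))"
proof -
  let ?S = "qcarrier n m"
  let ?v = "state x k" and ?w = "state y k"
  have step: "inner_on ?S (state x (Suc k)) (state y (Suc k))
      = inner_on ?S (query_op x ?v) (query_op y ?w)"
    by (simp add: inner_on_apply_op unitary_U[OF assms] finite_qcarrier)
  have "cmod (inner_on ?S (query_op x ?v) (query_op y ?w) - inner_on ?S ?v ?w)
      \<le> query_cost n x y (block_mass m ?v) + query_cost n y x (block_mass m ?w)"
  proof -
    have "cmod (inner_on ?S (query_op x ?v) (query_op y ?w) - inner_on ?S ?v ?w)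
      \<le> (\<Sum>i\<in>{1..n}. \<Sum>j\<in>{1..n}. if perm_matrix x i j \<noteq> perm_matrix y i j
          then query_weight n x i j * block_mass m ?v i j
            + block_mass m ?w i j / query_weight n x i j
          else 0)"
      by (rule norm_inner_on_query_op_diff_le) (rule query_weight_pos[OF n_pos])
    also have "\<dots> = query_cost n x y (block_mass m ?v) + query_cost n y x (block_mass m ?w)"
      unfolding query_cost_def sum.distrib[symmetric]
      by (intro sum.cong refl) (auto simp: divide_query_weight[OF n_pos])
    finally show ?thesis .
  qed
  then show ?thesis
    unfolding step
    using norm_triangle_ineq2[of "inner_on ?S ?v ?w" "inner_on ?S (query_op x ?v) (query_op y ?w)"]
      norm_minus_commute[of "inner_on ?S ?v ?w" "inner_on ?S (query_op x ?v) (query_op y ?w)"]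
    by linarith
qed

lemma norm_inner_on_state_T_le:
  assumes "(x, p) \<in> conj_pairs n"
  shows "cmod (inner_on (qcarrier n m) (state x T) (state (swap_conj p x) T)) \<le> 19/20"
proof -
  obtain u v where p: "p = (u, v)" by fastforce
  have x: "fpf_involution n x" and uv: "(u, v) \<in> flip_pairs n x"
    using assms by (auto simp: conj_pairs_def p)
  define y where "y = swap_conj p x"
  have y: "fpf_involution n y"
    using conj_pairs_swap_conj[OF assms] by (simp add: conj_pairs_def y_def)
  have "success_set x \<inter> success_set y = {}"
    using descriptor_swap_conj[OF x uv] by (auto simp: success_set_def y_def p)
  then have "mass_on (success_set x) (state y T)
      \<le> mass_on (qcarrier n m - success_set y) (state y T)"
    by (intro mass_on_mono) (auto simp: success_set_def finite_qcarrier)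
  also have "\<dots> = 1 - mass_on (success_set y) (state y T)"
    by (simp add: mass_on_Diff finite_qcarrier mass_on_state success_set_def)
  also have "\<dots> \<le> 1/3"
    using succeeds[OF y] by (simp add: success_prob_eq)
  finally have y_fails: "mass_on (success_set x) (state y T) \<le> 1/3" .
  have x_succeeds: "mass_on (success_set x) (state x T) \<ge> 2/3"
    using succeeds[OF x] by (simp add: success_prob_eq)
  have "success_set x \<subseteq> qcarrier n m"
    by (auto simp: success_set_def)
  from norm_inner_on_separated_le[OF finite_qcarrier this mass_on_state x_succeeds
      mass_on_state y_fails]
  show ?thesis by (simp add: y_def)
qed

definition progress :: "nat \<Rightarrow> real" where
  "progress k = (\<Sum>(x, p)\<in>conj_pairs n.
     cmod (inner_on (qcarrier n m) (state x k) (state (swap_conj p x) k)))"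

lemma progress_0: "progress 0 = card (conj_pairs n)"
  by (simp add: progress_def inner_on_state_0 split_def del: run.simps)

lemma progress_Suc_ge:
  assumes "Suc k \<le> T"
  shows "progress k - 8 * sqrt n * card {x. fpf_involution n x} \<le> progress (Suc k)"
proof -
  let ?b = "\<lambda>x. block_mass m (state x k)"
  have total: "(\<Sum>i\<in>{1..n}. \<Sum>j\<in>{1..n}. ?b x i j) = 1" for x
    using mass_on_state[of k x] assms by (simp add: mass_on_qcarrier)
  have "progress k - (\<Sum>(x, p)\<in>conj_pairs n. query_cost n x (swap_conj p x) (?b x)
      + query_cost n (swap_conj p x) x (?b (swap_conj p x))) \<le> progress (Suc k)"
    unfolding progress_def sum_subtractf[symmetric] split_def
    by (intro sum_mono norm_inner_on_state_Suc_ge assms)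
  moreover have "(\<Sum>(x, p)\<in>conj_pairs n. query_cost n x (swap_conj p x) (?b x)
      + query_cost n (swap_conj p x) x (?b (swap_conj p x)))
      \<le> 8 * sqrt n * card {x. fpf_involution n x}"
    by (intro sum_query_cost_conj_pairs_le block_mass_nonneg total)
  ultimately show ?thesis by linarith
qed

lemma progress_ge:
  "k \<le> T \<Longrightarrow> progress 0 - k * (8 * sqrt n * card {x. fpf_involution n x}) \<le> progress k"
proof (induction k)
  case (Suc k)
  then show ?case using progress_Suc_ge[of k] by (simp add: algebra_simps)
qed simp

lemma progress_T_le: "progress T \<le> 19/20 * card (conj_pairs n)"
proof -
  have "progress T \<le> (\<Sum>q\<in>conj_pairs n. 19/20)"
    unfolding progress_def split_def
    by (intro sum_mono) (metis norm_inner_on_state_T_le prod.collapse)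
  then show ?thesis by simp
qed

theorem queries_lower_bound:
  assumes "n \<ge> 4"
  shows "real n * sqrt n \<le> 1280 * real T"
proof -
  let ?X = "real (card {x. fpf_involution n x})"
  have X: "?X > 0"
    using fpf_involution_exists[OF even_n] finite_fpf_involutions by (auto simp: card_gt_0_iff)
  have "?X * (real n)\<^sup>2 \<le> 8 * real (card (conj_pairs n))"
    by (rule card_conj_pairs_ge[OF even_n assms])
  also have "\<dots> \<le> ?X * (1280 * real T * sqrt n)"
    using progress_ge[of T] progress_0 progress_T_le by (simp add: algebra_simps)
  finally have "(real n * sqrt n) * sqrt n \<le> (1280 * real T) * sqrt n"
    using X by (simp add: power2_eq_square mult.assoc)
  then show ?thesis
    using n_pos by simp
qed

end

lemma powr_three_halves: "real n powr (3/2) = real n * sqrt n"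
proof -
  have "real n powr (3/2) = real n powr (1 + 1/2)" by simp
  also have "\<dots> = real n powr 1 * real n powr (1/2)" by (rule powr_add)
  also have "\<dots> = real n * sqrt n" by (simp add: powr_half_sqrt)
  finally show ?thesis .
qed

theorem lemma11:
  shows "\<exists>c>0. \<exists>N. \<forall>n\<ge>N. even n \<longrightarrow>
    (\<forall>m T U f.
       query_algorithm n m T U \<and>
       (\<forall>\<sigma>. fpf_involution n \<sigma> \<longrightarrow> success_prob n m T U f \<sigma> \<ge> 2/3)
       \<longrightarrow> real T \<ge> c * real n powr (3/2))"
proof (intro exI[of _ "1/1280"] conjI exI[of _ 4] allI impI)
  fix n m T U f
  assume "4 \<le> n" "even n"
    and "query_algorithm n m T U \<and>
      (\<forall>\<sigma>. fpf_involution n \<sigma> \<longrightarrow> success_prob n m T U f \<sigma> \<ge> 2/3)"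
  then interpret descriptor_algorithm n m T U f
    by unfold_locales auto
  show "1/1280 * real n powr (3/2) \<le> real T"
    using queries_lower_bound[OF \<open>4 \<le> n\<close>] by (simp add: powr_three_halves)
qed simp

end
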